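(* Let $G=(V,E,\omega)$ be a graph and let $S_m\in st(G)$. If $S_m\subseteq S_{m-1}\subseteq\dots\subseteq S_1\subseteq V$, then $S_1,\dots,S_{m-1},S_m$ induces a sequence of reductions on $G$, and $\mathcal{R}(G;S_1,\dots,S_{m-1},S_m)=\mathcal{R}_{S_m}(G)$.
   Context: Let $\mathbb{W}$ be the field of rational functions $p(\lambda)/q(\lambda)$ in a complex variable $\lambda$ with $p,q\in\mathbb{C}[\lambda]$, $q\neq 0$. A graph $G=(V,E,\omega)$ is a finite directed graph with vertex set $V=\{v_1,\dots,v_n\}$, edge set $E$ (loops allowed, at most one edge $e_{ij}$ from $v_i$ to $v_j$) and edge weights $\omega:E\to\mathbb{W}\setminus\{0\}$; set $\omega(e_{ij})=0$ if there is no edge from $v_i$ to $v_j$. For $U\subseteq V$, $G|_U$ is the induced subgraph on $U$; $\bar S=V\setminus S$; $\ell(G)$ is $G$ with all loops removed. A path is a sequence $u_1,\dots,u_m$ ($m\ge 2$) of distinct vertices with an edge from $u_k$ to $u_{k+1}$ for each $k$; a cycle is such a sequence with $u_1=u_m$ and $u_1,\dots,u_{m-1}$ distinct; $u_2,\dots,u_{m-1}$ are the interior vertices. A nonempty $S\subseteq V$ is a structural set of $G$ if $\ell(G)|_{\bar S}$ contains no cycles and $\omega(e_{ii})\neq\lambda$ (as elements of $\mathbb{W}$) for every $v_i\in\bar S$; $st(G)$ is the set of structural sets. For $S\in st(G)$ and $v_i,v_j\in S$, $\mathcal{B}_{ij}(G;S)$ is the set of paths or cycles from $v_i$ to $v_j$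 with no interior vertex in $S$. For $\beta=u_1,\dots,u_m$ the branch product is $\mathcal{P}_\omega(\beta)=\omega(u_1u_2)\prod_{k=2}^{m-1}\frac{\omega(u_ku_{k+1})}{\lambda-\omega(u_ku_k)}$ ($=\omega(u_1u_2)$ if $m=2$), $\omega(uu')$ being the weight of the edge from $u$ to $u'$. The isospectral reduction $\mathcal{R}_S(G)$ is the graph with vertex set $S$, an edge from $v_i$ to $v_j$ iff $\mathcal{B}_{ij}(G;S)\neq\emptyset$, of weight $\sum_{\beta\in\mathcal{B}_{ij}(G;S)}\mathcal{P}_\omega(\beta)$. Sets $S_m\subseteq\dots\subseteq S_1\subseteq V$ induce a sequence of reductions on $G$ if $S_1\in st(G)$ and, setting $\mathcal{R}_1(G)=\mathcal{R}_{S_1}(G)$, for each $1\le i\le m-1$ one has $S_{i+1}\in st(\mathcal{R}_i(G))$, with $\mathcal{R}_{i+1}(G)=\mathcal{R}_{S_{i+1}}(\mathcal{R}_i(G))$; then $\mathcal{R}(G;S_1,\dots,S_m)=\mathcal{R}_m(G)$, and $S_m$ is the final vertex set. *)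

theory Defs
  imports "HOL-Computational_Algebra.Polynomial" "HOL-Computational_Algebra.Fraction_Field"
begin

type_synonym W = "complex poly fract"

definition lam :: W where
  "lam = Fract [:0, 1:] 1"

record 'v wgraph =
  verts :: "'v set"
  arcs  :: "('v \<times> 'v) set"
  wt    :: "'v \<Rightarrow> 'v \<Rightarrow> W"

definition wf_graph :: "'v wgraph \<Rightarrow> bool" where
  "wf_graph G \<longleftrightarrow> finite (verts G) \<and> arcs G \<subseteq> verts G \<times> verts G
     \<and> (\<forall>i j. (i, j) \<in> arcs G \<longrightarrow> wt G i j \<noteq> 0)
     \<and> (\<forall>i j. (i, j) \<notin> arcs G \<longrightarrow> wt G i j = 0)"

definition induced :: "'v wgraph \<Rightarrow> 'v set \<Rightarrow> 'v wgraph" where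
  "induced G U = \<lparr> verts = verts G \<inter> U, arcs = arcs G \<inter> (U \<times> U),
     wt = (\<lambda>i j. if i \<in> U \<and> j \<in> U then wt G i j else 0) \<rparr>"

definition loopless :: "'v wgraph \<Rightarrow> 'v wgraph" where
  "loopless G = \<lparr> verts = verts G, arcs = {(i, j). (i, j) \<in> arcs G \<and> i \<noteq> j},
     wt = (\<lambda>i j. if i \<noteq> j then wt G i j else 0) \<rparr>"

definition edge_seq :: "'v wgraph \<Rightarrow> 'v list \<Rightarrow> bool" where
  "edge_seq G xs \<longleftrightarrow> set xs \<subseteq> verts G \<and>
     (\<forall>k. Suc k < length xs \<longrightarrow> (xs ! k, xs ! Suc k) \<in> arcs G)"

definition is_path :: "'v wgraph \<Rightarrow> 'v list \<Rightarrow> bool" where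
  "is_path G xs \<longleftrightarrow> length xs \<ge> 2 \<and> distinct xs \<and> edge_seq G xs"

definition is_cycle :: "'v wgraph \<Rightarrow> 'v list \<Rightarrow> bool" where
  "is_cycle G xs \<longleftrightarrow> length xs \<ge> 2 \<and> hd xs = last xs \<and> distinct (butlast xs)
     \<and> edge_seq G xs"

definition structural :: "'v wgraph \<Rightarrow> 'v set \<Rightarrow> bool" where
  "structural G S \<longleftrightarrow> S \<noteq> {} \<and> S \<subseteq> verts G
     \<and> \<not> (\<exists>c. is_cycle (induced (loopless G) (verts G - S)) c)
     \<and> (\<forall>v \<in> verts G - S. wt G v v \<noteq> lam)"

definition st :: "'v wgraph \<Rightarrow> 'v set set" where
  "st G = {S. structural G S}"

definition branches :: "'v wgraph \<Rightarrow> 'v set \<Rightarrow> 'v \<Rightarrow> 'v \<Rightarrow> 'v list set" where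
  "branches G S i j = {\<beta>. (is_path G \<beta> \<or> is_cycle G \<beta>) \<and> hd \<beta> = i \<and> last \<beta> = j
      \<and> (\<forall>k. 0 < k \<and> k < length \<beta> - 1 \<longrightarrow> \<beta> ! k \<notin> S)}"

definition branch_prod :: "'v wgraph \<Rightarrow> 'v list \<Rightarrow> W" where
  "branch_prod G \<beta> = wt G (\<beta> ! 0) (\<beta> ! 1) *
     (\<Prod>k \<in> {1..<length \<beta> - 1}. wt G (\<beta> ! k) (\<beta> ! Suc k) / (lam - wt G (\<beta> ! k) (\<beta> ! k)))"

definition reduce :: "'v set \<Rightarrow> 'v wgraph \<Rightarrow> 'v wgraph" where
  "reduce S G = \<lparr> verts = S,
     arcs = {(i, j). i \<in> S \<and> j \<in> S \<and> branches G S i j \<noteq> {}},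
     wt = (\<lambda>i j. if i \<in> S \<and> j \<in> S \<and> branches G S i j \<noteq> {}
                 then (\<Sum>\<beta> \<in> branches G S i j. branch_prod G \<beta>) else 0) \<rparr>"

primrec red_seq :: "'v wgraph \<Rightarrow> (nat \<Rightarrow> 'v set) \<Rightarrow> nat \<Rightarrow> 'v wgraph" where
  "red_seq G S 0 = G"
| "red_seq G S (Suc i) = reduce (S (Suc i)) (red_seq G S i)"

definition induces_seq :: "'v wgraph \<Rightarrow> (nat \<Rightarrow> 'v set) \<Rightarrow> nat \<Rightarrow> bool" where
  "induces_seq G S m \<longleftrightarrow> S 1 \<in> st G \<and>
     (\<forall>i. 1 \<le> i \<and> i \<le> m - 1 \<longrightarrow> S (Suc i) \<in> st (red_seq G S i))"

end

theory Submission
  imports Defs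
begin

text \<open>
  For \<open>T \<subseteq> S\<close>, the branches of \<open>\<R>\<^sub>S(G)\<close> with respect to \<open>T\<close> are exactly the sequences
  of \<open>S\<close>-vertices met by the branches of \<open>G\<close> with respect to \<open>T\<close>; conversely a branch of
  \<open>\<R>\<^sub>S(G)\<close> expands, by replacing each of its edges by an \<open>S\<close>-branch of \<open>G\<close>, into a family of
  branches of \<open>G\<close>, and these families partition the branches of \<open>G\<close>. Branch products are
  multiplicative under concatenation (the junction vertex \<open>v\<close> contributing \<open>1/(\<lambda> - \<omega>(v,v))\<close>),
  and \<open>\<R>\<^sub>S(G)\<close> keeps the loop weight of every vertex of \<open>S - T\<close>, because a loop there through
  vertices outside \<open>S\<close> would be a cycle of \<open>G\<close> avoiding \<open>T\<close>. Summing gives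
  \<open>\<R>\<^sub>T(\<R>\<^sub>S(G)) = \<R>\<^sub>T(G)\<close>; the same cycle argument shows that \<open>T\<close> stays structural in \<open>\<R>\<^sub>S(G)\<close>,
  and since structural sets are closed upwards, induction along \<open>S\<^sub>1 \<supseteq> \<dots> \<supseteq> S\<^sub>m\<close> concludes.
\<close>

abbreviation along_arcs :: "'v wgraph \<Rightarrow> 'v list \<Rightarrow> bool" where
  "along_arcs G \<equiv> successively (\<lambda>a b. (a, b) \<in> arcs G)"

lemma edge_seq_iff: "edge_seq G xs \<longleftrightarrow> set xs \<subseteq> verts G \<and> along_arcs G xs"
  by (simp add: edge_seq_def successively_conv_nth)

lemma length_ge_2_obtain:
  assumes "length xs \<ge> 2"
  obtains x mid y where "xs = x # mid @ [y]"
  using assms by (cases xs rule: rev_cases) (auto simp: Suc_le_length_iff)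

lemma distinct_adj_if_distinct: "distinct xs \<Longrightarrow> distinct_adj xs"
  by (induction xs rule: induct_list012) auto

lemma interior_notin_iff:
  "(\<forall>k. 0 < k \<and> k < length (x # mid @ [y]) - 1 \<longrightarrow> (x # mid @ [y]) ! k \<notin> S)
     \<longleftrightarrow> set mid \<inter> S = {}"
proof
  assume interior: "\<forall>k. 0 < k \<and> k < length (x # mid @ [y]) - 1 \<longrightarrow> (x # mid @ [y]) ! k \<notin> S"
  show "set mid \<inter> S = {}"
  proof (rule ccontr)
    assume "set mid \<inter> S \<noteq> {}"
    then obtain n where n: "n < length mid" "mid ! n \<in> S" by (auto simp: in_set_conv_nth)
    then have "(x # mid @ [y]) ! Suc n \<in> S" by (simp add: nth_append)
    with interior n show False by auto
  qed
qed (auto simp: nth_append nth_Cons split: nat.splits dest!: nth_mem)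

lemma branches_iff:
  "\<beta> \<in> branches G S i j \<longleftrightarrow> (\<exists>mid. \<beta> = i # mid @ [j] \<and> set mid \<inter> S = {}
     \<and> set \<beta> \<subseteq> verts G \<and> along_arcs G \<beta> \<and> (distinct \<beta> \<or> i = j \<and> distinct (i # mid)))"
proof
  assume \<beta>: "\<beta> \<in> branches G S i j"
  then have "length \<beta> \<ge> 2" by (auto simp: branches_def is_path_def is_cycle_def)
  then obtain x mid y where "\<beta> = x # mid @ [y]" by (rule length_ge_2_obtain)
  with \<beta> interior_notin_iff[of x mid y S] show "\<exists>mid. \<beta> = i # mid @ [j] \<and> set mid \<inter> S = {}
     \<and> set \<beta> \<subseteq> verts G \<and> along_arcs G \<beta> \<and> (distinct \<beta> \<or> i = j \<and> distinct (i # mid))"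
    by (auto simp: branches_def is_path_def is_cycle_def edge_seq_iff butlast_append)
next
  assume "\<exists>mid. \<beta> = i # mid @ [j] \<and> set mid \<inter> S = {}
     \<and> set \<beta> \<subseteq> verts G \<and> along_arcs G \<beta> \<and> (distinct \<beta> \<or> i = j \<and> distinct (i # mid))"
  then obtain mid where "\<beta> = i # mid @ [j]" "set mid \<inter> S = {}" "set \<beta> \<subseteq> verts G"
    "along_arcs G \<beta>" "distinct \<beta> \<or> i = j \<and> distinct (i # mid)" by blast
  then show "\<beta> \<in> branches G S i j"
    using interior_notin_iff[of i mid j S]
    by (auto simp: branches_def is_path_def is_cycle_def edge_seq_iff butlast_append)
qed

lemma finite_branches:
  assumes "finite (verts G)"
  shows "finite (branches G S i j)"
proof (rule finite_subset)
  show "branches G S i j \<subseteq> {xs. set xs \<subseteq> verts G \<and> length xs \<le> card (verts G) + 1}"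
  proof
    fix \<beta> assume "\<beta> \<in> branches G S i j"
    then obtain mid where mid: "\<beta> = i # mid @ [j]" "set \<beta> \<subseteq> verts G" "distinct (i # mid)"
      unfolding branches_iff by auto
    have "length (i # mid) = card (set (i # mid))" using mid(3) by (simp add: distinct_card)
    also have "\<dots> \<le> card (verts G)" using mid(1,2) assms by (intro card_mono) auto
    finally show "\<beta> \<in> {xs. set xs \<subseteq> verts G \<and> length xs \<le> card (verts G) + 1}"
      using mid by simp
  qed
qed (rule finite_lists_length_le[OF assms])

lemma verts_reduce [simp]: "verts (reduce S G) = S"
  by (simp add: reduce_def)

lemma arcs_reduce: "(x, y) \<in> arcs (reduce S G) \<longleftrightarrow> x \<in> S \<and> y \<in> S \<and> branches G S x y \<noteq> {}"
  by (simp add: reduce_def)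

lemma wt_reduce:
  "x \<in> S \<Longrightarrow> y \<in> S \<Longrightarrow> wt (reduce S G) x y = (\<Sum>\<beta>\<in>branches G S x y. branch_prod G \<beta>)"
  by (simp add: reduce_def)

lemma verts_induced_loopless [simp]: "verts (induced (loopless H) U) = verts H \<inter> U"
  by (simp add: induced_def loopless_def)

lemma arcs_induced_loopless [simp]:
  "(x, y) \<in> arcs (induced (loopless H) U) \<longleftrightarrow> (x, y) \<in> arcs H \<and> x \<noteq> y \<and> x \<in> U \<and> y \<in> U"
  by (auto simp: induced_def loopless_def)

lemma branch_prod_two: "branch_prod H [x, y] = wt H x y"
  by (simp add: branch_prod_def)

lemma branch_prod_Cons:
  "branch_prod H (x # y # z # r) = wt H x y / (lam - wt H y y) * branch_prod H (y # z # r)"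
proof -
  define f where "f k = wt H ((x # y # z # r) ! k) ((x # y # z # r) ! Suc k)
    / (lam - wt H ((x # y # z # r) ! k) ((x # y # z # r) ! k))" for k
  define g where "g k = wt H ((y # z # r) ! k) ((y # z # r) ! Suc k)
    / (lam - wt H ((y # z # r) ! k) ((y # z # r) ! k))" for k
  have "prod f {1..<Suc (Suc (length r))} = f 1 * prod f {Suc 1..<Suc (Suc (length r))}"
    by (rule prod.atLeast_Suc_lessThan) simp
  also have "prod f {Suc 1..<Suc (Suc (length r))} = prod g {1..<Suc (length r)}"
    unfolding prod.shift_bounds_Suc_ivl f_def g_def by simp
  finally show ?thesis by (simp add: branch_prod_def f_def g_def)
qed

lemma branch_prod_append:
  "length a \<ge> 2 \<Longrightarrow> length b \<ge> 2 \<Longrightarrow> last a = hd b \<Longrightarrow>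
   branch_prod H (a @ tl b) = branch_prod H a * branch_prod H b / (lam - wt H (hd b) (hd b))"
proof (induction a rule: induct_list012)
  case (3 x y a')
  show ?case
  proof (cases a')
    case Nil
    with "3.prems" obtain z r where "b = y # z # r" by (cases b; cases "tl b") auto
    with Nil show ?thesis by (simp add: branch_prod_Cons branch_prod_two)
  next
    case (Cons z r)
    with "3.IH"(2) "3.prems" show ?thesis by (simp add: branch_prod_Cons)
  qed
qed simp_all

text \<open>The walks of \<open>G\<close> represented by a walk \<open>\<beta>\<close> of \<open>\<R>\<^sub>S(G)\<close>: each edge of \<open>\<beta>\<close> is
  replaced by an \<open>S\<close>-branch of \<open>G\<close>.\<close>
fun expansions :: "'v wgraph \<Rightarrow> 'v set \<Rightarrow> 'v list \<Rightarrow> 'v list set" where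
  "expansions G S (x # y # rest) = (if rest = [] then branches G S x y
      else (\<lambda>(a, b). a @ tl b) ` (branches G S x y \<times> expansions G S (y # rest)))"
| "expansions G S _ = {}"

lemma expansionsD:
  "\<gamma> \<in> expansions G S \<beta> \<Longrightarrow> set \<beta> \<subseteq> S \<Longrightarrow>
    length \<beta> \<ge> 2 \<and> length \<gamma> \<ge> 2 \<and> hd \<gamma> = hd \<beta> \<and> last \<gamma> = last \<beta>
    \<and> filter (\<lambda>x. x \<in> S) \<gamma> = \<beta> \<and> set \<gamma> \<subseteq> verts G \<and> along_arcs G \<gamma>
    \<and> successively (\<lambda>x y. branches G S x y \<noteq> {}) \<beta>"
proof (induction G S \<beta> arbitrary: \<gamma> rule: expansions.induct)
  case (1 G S x y rest)
  show ?case
  proof (cases "rest = []")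
    case True
    with 1 obtain mid where mid: "\<gamma> = x # mid @ [y]" "set mid \<inter> S = {}" "set \<gamma> \<subseteq> verts G"
      "along_arcs G \<gamma>" by (auto simp: branches_iff)
    then have "filter (\<lambda>x. x \<in> S) mid = []" by (auto simp: filter_empty_conv)
    with mid 1 True show ?thesis by auto
  next
    case False
    with "1.prems" obtain a b where ab: "\<gamma> = a @ tl b" "a \<in> branches G S x y"
      "b \<in> expansions G S (y # rest)" by auto
    from ab(2) obtain mid where mid: "a = x # mid @ [y]" "set mid \<inter> S = {}" "set a \<subseteq> verts G"
      "along_arcs G a" by (auto simp: branches_iff)
    have IH: "length b \<ge> 2 \<and> hd b = y \<and> last b = last (y # rest)
      \<and> filter (\<lambda>x. x \<in> S) b = y # rest \<and> set b \<subseteq> verts G \<and> along_arcs G b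
      \<and> successively (\<lambda>x y. branches G S x y \<noteq> {}) (y # rest)"
      using "1.IH"[OF False ab(3)] "1.prems"(2) by simp
    then obtain tb where tb: "b = y # tb" by (cases b) auto
    have "filter (\<lambda>x. x \<in> S) mid = []" using mid(2) by (auto simp: filter_empty_conv)
    moreover have "\<gamma> = x # mid @ b" using ab(1) mid(1) tb by simp
    ultimately show ?thesis using IH mid tb ab(2) False "1.prems"(2)
      by (auto simp: successively_append_iff successively_Cons hd_append)
  qed
qed auto

lemma finite_expansions: "finite (verts G) \<Longrightarrow> finite (expansions G S \<beta>)"
  by (induction G S \<beta> rule: expansions.induct) (auto simp: finite_branches)

lemma expansions_nonempty:
  "length \<beta> \<ge> 2 \<Longrightarrow> successively (\<lambda>x y. branches G S x y \<noteq> {}) \<beta> \<Longrightarrow> expansions G S \<beta> \<noteq> {}"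
  by (induction G S \<beta> rule: expansions.induct) (auto simp: Suc_le_eq)

lemma append_Cons_eq_disjoint:
  "set m \<inter> S = {} \<Longrightarrow> set m' \<inter> S = {} \<Longrightarrow> y \<in> S \<Longrightarrow> m @ y # t = m' @ y # t'
    \<Longrightarrow> m = m' \<and> t = t'"
proof (induction m arbitrary: m')
  case Nil then show ?case by (cases m') auto
next
  case (Cons z m) then show ?case by (cases m') auto
qed

lemma glue_branches_inject:
  assumes "y \<in> S" "a \<in> branches G S x y" "a' \<in> branches G S x y"
    and "b \<noteq> []" "hd b = y" "b' \<noteq> []" "hd b' = y" and eq: "a @ tl b = a' @ tl b'"
  shows "a = a' \<and> b = b'"
proof -
  obtain m where m: "a = x # m @ [y]" "set m \<inter> S = {}"
    using assms(2) by (auto simp: branches_iff)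
  obtain m' where m': "a' = x # m' @ [y]" "set m' \<inter> S = {}"
    using assms(3) by (auto simp: branches_iff)
  from eq m(1) m'(1) have "m @ y # tl b = m' @ y # tl b'" by simp
  with append_Cons_eq_disjoint[OF m(2) m'(2) assms(1)] have "m = m'" "tl b = tl b'" by blast+
  moreover have "b = b'" using \<open>tl b = tl b'\<close> assms(4-7) by (cases b; cases b') auto
  ultimately show ?thesis using m(1) m'(1) by simp
qed

lemma inj_on_glue_branches:
  assumes "y \<in> S"
  shows "inj_on (\<lambda>(a, b). a @ tl b) (branches G S x y \<times> {b. b \<noteq> [] \<and> hd b = y})"
proof (rule inj_onI)
  fix p q
  assume "p \<in> branches G S x y \<times> {b. b \<noteq> [] \<and> hd b = y}"
    and "q \<in> branches G S x y \<times> {b. b \<noteq> [] \<and> hd b = y}"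
    and "(\<lambda>(a, b). a @ tl b) p = (\<lambda>(a, b). a @ tl b) q"
  moreover obtain a b a' b' where "p = (a, b)" "q = (a', b')" by (cases p, cases q)
  ultimately show "p = q"
    using glue_branches_inject[OF assms, where G = G and x = x and a = a and b = b and a' = a'
        and b' = b']
    by simp
qed

lemma sum_branch_prod_expansions:
  "finite (verts G) \<Longrightarrow> set \<beta> \<subseteq> S \<Longrightarrow> (\<forall>u\<in>set (tl (butlast \<beta>)). wt (reduce S G) u u = wt G u u)
    \<Longrightarrow> length \<beta> \<ge> 2 \<Longrightarrow> (\<Sum>\<gamma>\<in>expansions G S \<beta>. branch_prod G \<gamma>) = branch_prod (reduce S G) \<beta>"
proof (induction G S \<beta> rule: expansions.induct)
  case (1 G S x y rest)
  show ?case
  proof (cases "rest = []")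
    case True
    with "1.prems"(2) show ?thesis by (simp add: branch_prod_two wt_reduce)
  next
    case False
    then obtain z r where rest: "rest = z # r" by (cases rest) auto
    let ?B = "branches G S x y" and ?E = "expansions G S (y # rest)" and ?d = "lam - wt G y y"
    have E: "length b \<ge> 2 \<and> hd b = y" if "b \<in> ?E" for b
      using expansionsD[OF that] "1.prems"(2) by auto
    have B: "length a \<ge> 2 \<and> last a = y" if "a \<in> ?B" for a
      using that by (auto simp: branches_iff)
    have "y \<in> S" using "1.prems"(2) by simp
    then have inj: "inj_on (\<lambda>(a, b). a @ tl b) (?B \<times> ?E)"
      by (rule inj_on_subset[OF inj_on_glue_branches]) (use E in fastforce)
    have "(\<Sum>\<gamma>\<in>expansions G S (x # y # rest). branch_prod G \<gamma>)
        = sum (branch_prod G) ((\<lambda>(a, b). a @ tl b) ` (?B \<times> ?E))"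
      using False by simp
    also have "\<dots> = (\<Sum>(a, b)\<in>?B \<times> ?E. branch_prod G (a @ tl b))"
      by (subst sum.reindex[OF inj]) (simp add: case_prod_unfold)
    also have "\<dots> = (\<Sum>(a, b)\<in>?B \<times> ?E. branch_prod G a * branch_prod G b / ?d)"
      by (intro sum.cong refl) (use E B branch_prod_append in fastforce)
    also have "\<dots> = (\<Sum>a\<in>?B. \<Sum>b\<in>?E. branch_prod G a * branch_prod G b) / ?d"
      by (simp add: sum.cartesian_product[symmetric] sum_divide_distrib)
    also have "\<dots> = (\<Sum>a\<in>?B. branch_prod G a) * (\<Sum>b\<in>?E. branch_prod G b) / ?d"
      by (simp add: sum_product)
    also have "(\<Sum>b\<in>?E. branch_prod G b) = branch_prod (reduce S G) (y # rest)"
      using "1.IH"[OF False] "1.prems" rest by auto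
    also have "(\<Sum>a\<in>?B. branch_prod G a) = wt (reduce S G) x y"
      using "1.prems"(2) by (simp add: wt_reduce)
    also have "wt G y y = wt (reduce S G) y y"
      using "1.prems"(3) rest by simp
    finally show ?thesis unfolding rest by (simp add: branch_prod_Cons)
  qed
qed auto

lemma distinct_adj_expansions:
  "\<gamma> \<in> expansions G S \<beta> \<Longrightarrow> set \<beta> \<subseteq> S \<Longrightarrow> distinct_adj \<beta> \<Longrightarrow> distinct_adj \<gamma>"
proof (induction G S \<beta> arbitrary: \<gamma> rule: expansions.induct)
  case (1 G S x y rest)
  have xy: "x \<noteq> y" using "1.prems"(3) by simp
  show ?case
  proof (cases "rest = []")
    case True
    with "1.prems" xy show ?thesis by (auto simp: branches_iff intro: distinct_adj_if_distinct)
  next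
    case False
    with "1.prems"(1) obtain a b where ab: "\<gamma> = a @ tl b" "a \<in> branches G S x y"
      "b \<in> expansions G S (y # rest)" by auto
    from ab(2) xy obtain mid where mid: "a = x # mid @ [y]" "distinct a"
      by (auto simp: branches_iff)
    have "distinct_adj b"
      using "1.IH"[OF False ab(3)] "1.prems"(2,3) by (auto simp: distinct_adj_Cons)
    moreover obtain tb where tb: "b = y # tb"
      using expansionsD[OF ab(3)] "1.prems"(2) by (cases b) auto
    moreover have "distinct_adj (x # mid)" "last (x # mid) \<noteq> y"
      using distinct_adj_if_distinct[OF mid(2)] unfolding mid(1)
      using distinct_adj_append_iff[of "x # mid" "[y]"] by auto
    moreover have "\<gamma> = (x # mid) @ b" using ab(1) mid(1) tb by simp
    ultimately show ?thesis using distinct_adj_append_iff[of "x # mid" b] by auto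
  qed
qed auto

lemma walk_in_expansions:
  "x \<in> S \<Longrightarrow> y \<in> S \<Longrightarrow> set (x # mid @ [y]) \<subseteq> verts G \<Longrightarrow> along_arcs G (x # mid @ [y])
   \<Longrightarrow> distinct (x # mid @ [y]) \<or> x = y \<and> distinct (x # mid)
   \<Longrightarrow> x # mid @ [y] \<in> expansions G S (x # filter (\<lambda>v. v \<in> S) mid @ [y])"
proof (induction "length mid" arbitrary: x mid rule: less_induct)
  case less
  show ?case
  proof (cases "\<exists>v\<in>set mid. v \<in> S")
    case False
    then have "filter (\<lambda>v. v \<in> S) mid = []" by (auto simp: filter_empty_conv)
    with less.prems False show ?thesis by (auto simp: branches_iff)
  next
    case True
    then obtain p z q where pzq: "mid = p @ z # q" "z \<in> S" "\<forall>v\<in>set p. v \<notin> S"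
      using split_list_first_prop[of mid "\<lambda>v. v \<in> S"] by blast
    have walk: "along_arcs G (x # p @ [z])" "along_arcs G (z # q @ [y])"
      using less.prems(4) pzq successively_append_iff[of _ "x # p" "z # q @ [y]"]
        successively_append_iff[of _ "x # p @ [z]" "q @ [y]"] by auto
    have "x # p @ [z] \<in> branches G S x z"
      unfolding branches_iff using pzq less.prems(3,5) walk by auto
    moreover have "z # q @ [y] \<in> expansions G S (z # filter (\<lambda>v. v \<in> S) q @ [y])"
      using less.hyps[of q z] pzq less.prems(2,3,5) walk by auto
    ultimately have "x # mid @ [y] \<in> (\<lambda>(a, b). a @ tl b) `
        (branches G S x z \<times> expansions G S (z # filter (\<lambda>v. v \<in> S) q @ [y]))"
      using pzq by (intro rev_image_eqI[of "(x # p @ [z], z # q @ [y])"]) auto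
    with pzq show ?thesis by (simp add: filter_empty_conv)
  qed
qed

lemma successively_interior: "successively P (x # xs @ [y]) \<Longrightarrow> successively P xs"
  by (simp add: successively_Cons successively_append_iff)

lemma distinct_adj_branch:
  assumes \<beta>: "\<beta> \<in> branches G S i j" and "\<beta> \<noteq> [j, j]"
  shows "distinct_adj \<beta>"
proof -
  obtain mid where mid: "\<beta> = i # mid @ [j]" "distinct \<beta> \<or> i = j \<and> distinct (i # mid)"
    using \<beta> unfolding branches_iff by blast
  show ?thesis
  proof (cases "distinct \<beta>")
    case False
    with mid assms(2) have "i = j" "distinct (i # mid)" "mid \<noteq> []" by auto
    then have "last (i # mid) \<noteq> j" by (metis distinct.simps(2) last.simps last_in_set)
    with mid(1) distinct_adj_if_distinct[OF \<open>distinct (i # mid)\<close>] show ?thesis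
      using distinct_adj_append_iff[of "i # mid" "[j]"] by simp
  qed (rule distinct_adj_if_distinct)
qed

lemma set_branches_reduce: "\<beta> \<in> branches (reduce S G) T i j \<Longrightarrow> set \<beta> \<subseteq> S"
  by (auto simp: branches_iff)

lemma expansions_branch_reduce_nonempty:
  assumes "\<beta> \<in> branches (reduce S G) T i j"
  shows "expansions G S \<beta> \<noteq> {}"
proof (rule expansions_nonempty)
  obtain mid where "\<beta> = i # mid @ [j]" and walk: "along_arcs (reduce S G) \<beta>"
    using assms unfolding branches_iff by blast
  then show "length \<beta> \<ge> 2" by simp
  from walk show "successively (\<lambda>x y. branches G S x y \<noteq> {}) \<beta>"
    by (rule successively_mono) (simp add: arcs_reduce)
qed

lemma is_cycle_induced_loopless:
  assumes "length ws \<ge> 2" "hd ws = last ws" "distinct (butlast ws)"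
    "along_arcs G ws" "distinct_adj ws" "set ws \<subseteq> verts G - T"
  shows "is_cycle (induced (loopless G) (verts G - T)) ws"
  unfolding is_cycle_def edge_seq_def
proof (intro conjI allI impI)
  fix k assume k: "Suc k < length ws"
  then have "ws ! k \<in> set ws" "ws ! Suc k \<in> set ws" by auto
  with successively_nth[OF assms(4) k] distinct_adj_nth[OF assms(5) k] assms(6)
  show "(ws ! k, ws ! Suc k) \<in> arcs (induced (loopless G) (verts G - T))"
    by auto
qed (use assms in auto)

context
  fixes G :: "'v wgraph" and S T :: "'v set"
  assumes wf: "wf_graph G" and T_st: "T \<in> st G" and T_sub: "T \<subseteq> S" and S_sub: "S \<subseteq> verts G"
begin

lemma no_closed_walk_outside:
  "length ws \<ge> 2 \<Longrightarrow> hd ws = last ws \<Longrightarrow> along_arcs G ws \<Longrightarrow> distinct_adj ws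
    \<Longrightarrow> set ws \<subseteq> verts G - T \<Longrightarrow> False"
proof (induction "length ws" arbitrary: ws rule: less_induct)
  case less
  show ?case
  proof (cases "distinct (butlast ws)")
    case True
    with less.prems have "is_cycle (induced (loopless G) (verts G - T)) ws"
      by (intro is_cycle_induced_loopless)
    with T_st show False by (auto simp: st_def structural_def)
  next
    case False
    then obtain xs z ys zs where "butlast ws = xs @ [z] @ ys @ [z] @ zs"
      using not_distinct_decomp by blast
    moreover have "ws = butlast ws @ [last ws]"
      using less.prems(1) by (cases ws rule: rev_cases) auto
    ultimately obtain w where ws: "ws = xs @ (z # ys @ [z]) @ (zs @ [w])" by simp
    have "along_arcs G (z # ys @ [z])"
      using less.prems(3) unfolding ws successively_append_iff by blast
    moreover have "distinct_adj (z # ys @ [z])"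
      using less.prems(4) unfolding ws distinct_adj_append_iff by blast
    moreover have "set (z # ys @ [z]) \<subseteq> verts G - T" using less.prems(5) unfolding ws by auto
    moreover have "length (z # ys @ [z]) < length ws" unfolding ws by simp
    ultimately show False using less.hyps[of "z # ys @ [z]"] by simp
  qed
qed

lemma distinct_walk_outside:
  assumes "along_arcs G ws" "distinct_adj ws" "set ws \<subseteq> verts G - T"
  shows "distinct ws"
proof (rule ccontr)
  assume "\<not> distinct ws"
  then obtain xs z ys zs where ws: "ws = xs @ (z # ys @ [z]) @ zs"
    using not_distinct_decomp by fastforce
  have "along_arcs G (z # ys @ [z])"
    using assms(1) unfolding ws successively_append_iff by blast
  moreover have "distinct_adj (z # ys @ [z])"
    using assms(2) unfolding ws distinct_adj_append_iff by blast
  moreover have "set (z # ys @ [z]) \<subseteq> verts G - T" using assms(3) unfolding ws by auto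
  ultimately show False using no_closed_walk_outside[of "z # ys @ [z]"] by simp
qed

lemma wt_reduce_loop:
  assumes u: "u \<in> S - T"
  shows "wt (reduce S G) u u = wt G u u"
proof -
  have "branches G S u u \<subseteq> {[u, u]}"
  proof
    fix \<beta> assume \<beta>: "\<beta> \<in> branches G S u u"
    show "\<beta> \<in> {[u, u]}"
    proof (rule ccontr)
      assume "\<beta> \<notin> {[u, u]}"
      with \<beta> have "distinct_adj \<beta>" by (simp add: distinct_adj_branch)
      moreover obtain mid where "\<beta> = u # mid @ [u]" "set mid \<inter> S = {}" "set \<beta> \<subseteq> verts G"
        "along_arcs G \<beta>"
        using \<beta> unfolding branches_iff by blast
      moreover from calculation have "set \<beta> \<subseteq> verts G - T" using u T_sub by auto
      ultimately show False using no_closed_walk_outside[of \<beta>] by simp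
    qed
  qed
  then consider "branches G S u u = {[u, u]}" | "branches G S u u = {}"
    by (auto simp: subset_singleton_iff)
  then show ?thesis
  proof cases
    case 1
    with u show ?thesis by (simp add: wt_reduce branch_prod_two)
  next
    case 2
    have "(u, u) \<notin> arcs G"
    proof
      assume "(u, u) \<in> arcs G"
      with u S_sub have "[u, u] \<in> branches G S u u"
        unfolding branches_iff by (intro exI[of _ "[]"]) auto
      with 2 show False by simp
    qed
    with 2 u wf show ?thesis by (simp add: wt_reduce wf_graph_def)
  qed
qed

lemma structural_reduce: "T \<in> st (reduce S G)"
proof -
  have no_cycle: "\<not> is_cycle (induced (loopless (reduce S G)) (S - T)) c" for c
  proof
    assume "is_cycle (induced (loopless (reduce S G)) (S - T)) c"
    then have c: "length c \<ge> 2" "hd c = last c" "set c \<subseteq> S - T"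
      and walk: "along_arcs (induced (loopless (reduce S G)) (S - T)) c"
      unfolding is_cycle_def edge_seq_iff by auto
    have "successively (\<lambda>x y. branches G S x y \<noteq> {}) c"
      using walk by (rule successively_mono) (simp add: arcs_reduce)
    with c(1) obtain \<gamma> where \<gamma>: "\<gamma> \<in> expansions G S c"
      using expansions_nonempty by blast
    have c_S: "set c \<subseteq> S" using c(3) by auto
    have "distinct_adj c" unfolding distinct_adj_def
      using walk by (rule successively_mono) simp
    with \<gamma> c_S have "distinct_adj \<gamma>" by (rule distinct_adj_expansions)
    moreover have "length \<gamma> \<ge> 2" "hd \<gamma> = last \<gamma>" "along_arcs G \<gamma>"
      and \<gamma>_S: "filter (\<lambda>x. x \<in> S) \<gamma> = c" and "set \<gamma> \<subseteq> verts G"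
      using expansionsD[OF \<gamma> c_S] c(2) by auto
    moreover have "set \<gamma> \<inter> T \<subseteq> set (filter (\<lambda>x. x \<in> S) \<gamma>)" using T_sub by auto
    with \<gamma>_S c(3) \<open>set \<gamma> \<subseteq> verts G\<close> have "set \<gamma> \<subseteq> verts G - T" by auto
    ultimately show False using no_closed_walk_outside by blast
  qed
  moreover have "wt (reduce S G) v v \<noteq> lam" if v: "v \<in> S - T" for v
  proof -
    from v S_sub T_st have "wt G v v \<noteq> lam" by (auto simp: st_def structural_def)
    with wt_reduce_loop[OF v] show ?thesis by simp
  qed
  moreover have "T \<noteq> {}" using T_st by (simp add: st_def structural_def)
  ultimately show ?thesis using T_sub unfolding st_def structural_def by simp
qed

lemma expansions_subset_branches:
  assumes i: "i \<in> T" and j: "j \<in> T" and \<beta>: "\<beta> \<in> branches (reduce S G) T i j"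
  shows "expansions G S \<beta> \<subseteq> branches G T i j"
proof
  fix \<gamma> assume \<gamma>: "\<gamma> \<in> expansions G S \<beta>"
  obtain mb where mb: "\<beta> = i # mb @ [j]" "set mb \<inter> T = {}"
    using \<beta> unfolding branches_iff by blast
  have \<beta>_S: "set \<beta> \<subseteq> S" using \<beta> by (rule set_branches_reduce)
  note \<gamma>_walk = expansionsD[OF \<gamma> \<beta>_S]
  then have "length \<gamma> \<ge> 2" by simp
  then obtain x mg y where "\<gamma> = x # mg @ [y]" by (rule length_ge_2_obtain)
  with \<gamma>_walk mb(1) have \<gamma>_eq: "\<gamma> = i # mg @ [j]" by simp
  moreover have "i \<in> S" "j \<in> S" using i j T_sub by auto
  ultimately have "filter (\<lambda>x. x \<in> S) mg = mb" using \<gamma>_walk mb(1) by simp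
  moreover have "set mg \<inter> T \<subseteq> set (filter (\<lambda>x. x \<in> S) mg)" using T_sub by auto
  ultimately have mg_T: "set mg \<inter> T = {}" using mb(2) by auto
  have "distinct \<gamma> \<or> i = j \<and> distinct (i # mg)"
  proof (cases "mb = []")
    case True
    with \<gamma> mb(1) have "\<gamma> \<in> branches G S i j" by simp
    with \<gamma>_eq show ?thesis unfolding branches_iff by auto
  next
    case False
    with \<beta> mb(1) have "distinct_adj \<beta>" by (simp add: distinct_adj_branch)
    with \<gamma> \<beta>_S have "distinct_adj \<gamma>" by (rule distinct_adj_expansions)
    with \<gamma>_walk \<gamma>_eq mg_T have "distinct mg"
      by (intro distinct_walk_outside) (auto simp: distinct_adj_def dest: successively_interior)
    with \<gamma>_eq mg_T i j show ?thesis by auto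
  qed
  with \<gamma>_eq mg_T \<gamma>_walk show "\<gamma> \<in> branches G T i j" unfolding branches_iff by auto
qed

lemma branch_in_expansions:
  assumes i: "i \<in> T" and j: "j \<in> T" and \<gamma>: "\<gamma> \<in> branches G T i j"
  shows "\<exists>\<beta>\<in>branches (reduce S G) T i j. \<gamma> \<in> expansions G S \<beta>"
proof -
  obtain mg where mg: "\<gamma> = i # mg @ [j]" "set mg \<inter> T = {}" "set \<gamma> \<subseteq> verts G"
    "along_arcs G \<gamma>" "distinct \<gamma> \<or> i = j \<and> distinct (i # mg)"
    using \<gamma> unfolding branches_iff by blast
  have ij: "i \<in> S" "j \<in> S" using i j T_sub by auto
  let ?mb = "filter (\<lambda>v. v \<in> S) mg"
  have \<gamma>_exp: "\<gamma> \<in> expansions G S (i # ?mb @ [j])"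
    using mg(3-5) unfolding mg(1) by (intro walk_in_expansions ij) auto
  have \<beta>_S: "set (i # ?mb @ [j]) \<subseteq> S" using ij by auto
  have "along_arcs (reduce S G) (i # ?mb @ [j])"
    using conjunct2[OF expansionsD[OF \<gamma>_exp \<beta>_S]]
  proof (elim conjE successively_mono)
    fix x y assume "x \<in> set (i # ?mb @ [j])" "y \<in> set (i # ?mb @ [j])" "branches G S x y \<noteq> {}"
    with \<beta>_S show "(x, y) \<in> arcs (reduce S G)" by (auto simp: arcs_reduce)
  qed
  moreover have "distinct (i # ?mb @ [j]) \<or> i = j \<and> distinct (i # ?mb)"
    using mg(1,5) by (auto simp: distinct_filter)
  moreover have "set ?mb \<inter> T = {}" using mg(2) by auto
  ultimately have "i # ?mb @ [j] \<in> branches (reduce S G) T i j"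
    using \<beta>_S unfolding branches_iff by auto
  with \<gamma>_exp show ?thesis by blast
qed

lemma branches_eq_UN_expansions:
  assumes "i \<in> T" "j \<in> T"
  shows "branches G T i j = (\<Union>\<beta>\<in>branches (reduce S G) T i j. expansions G S \<beta>)"
  using expansions_subset_branches[OF assms] branch_in_expansions[OF assms] by blast

text \<open>The expansions of distinct branches are disjoint, since \<open>\<beta>\<close> is recovered from any of its
  expansions as the subsequence of \<open>S\<close>-vertices.\<close>
lemma sum_branch_prod_reduce:
  assumes "i \<in> T" "j \<in> T"
  shows "(\<Sum>\<beta>\<in>branches (reduce S G) T i j. branch_prod (reduce S G) \<beta>)
    = (\<Sum>\<gamma>\<in>branches G T i j. branch_prod G \<gamma>)"
proof -
  let ?B = "branches (reduce S G) T i j"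
  have fin_V: "finite (verts G)" using wf by (simp add: wf_graph_def)
  have "finite S" using finite_subset[OF S_sub fin_V] .
  then have "finite ?B" using finite_branches[of "reduce S G"] by simp
  moreover have "\<forall>\<beta>\<in>?B. finite (expansions G S \<beta>)" using finite_expansions[OF fin_V] by blast
  moreover have "\<forall>\<beta>\<in>?B. \<forall>\<beta>'\<in>?B. \<beta> \<noteq> \<beta>' \<longrightarrow> expansions G S \<beta> \<inter> expansions G S \<beta>' = {}"
  proof (intro ballI impI)
    have "filter (\<lambda>x. x \<in> S) \<gamma> = \<beta>" if "\<beta> \<in> ?B" "\<gamma> \<in> expansions G S \<beta>" for \<beta> \<gamma>
      using expansionsD[OF that(2) set_branches_reduce[OF that(1)]] by simp
    then show "expansions G S \<beta> \<inter> expansions G S \<beta>' = {}"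
      if "\<beta> \<in> ?B" "\<beta>' \<in> ?B" "\<beta> \<noteq> \<beta>'" for \<beta> \<beta>'
      using that by blast
  qed
  ultimately have "(\<Sum>\<gamma>\<in>branches G T i j. branch_prod G \<gamma>)
      = (\<Sum>\<beta>\<in>?B. \<Sum>\<gamma>\<in>expansions G S \<beta>. branch_prod G \<gamma>)"
    unfolding branches_eq_UN_expansions[OF assms] by (rule sum.UNION_disjoint)
  also have "\<dots> = (\<Sum>\<beta>\<in>?B. branch_prod (reduce S G) \<beta>)"
  proof (rule sum.cong)
    fix \<beta> assume \<beta>: "\<beta> \<in> ?B"
    then obtain mb where mb: "\<beta> = i # mb @ [j]" "set mb \<inter> T = {}"
      unfolding branches_iff by blast
    have \<beta>_S: "set \<beta> \<subseteq> S" using \<beta> by (rule set_branches_reduce)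
    with mb have "\<forall>u\<in>set (tl (butlast \<beta>)). wt (reduce S G) u u = wt G u u"
      by (auto intro: wt_reduce_loop)
    with fin_V \<beta>_S mb(1) show "(\<Sum>\<gamma>\<in>expansions G S \<beta>. branch_prod G \<gamma>) = branch_prod (reduce S G) \<beta>"
      by (intro sum_branch_prod_expansions) auto
  qed simp
  finally show ?thesis ..
qed

lemma reduce_reduce: "reduce T (reduce S G) = reduce T G"
proof -
  have "branches (reduce S G) T i j = {} \<longleftrightarrow> branches G T i j = {}" if "i \<in> T" "j \<in> T" for i j
    using branches_eq_UN_expansions[OF that] expansions_branch_reduce_nonempty[of _ S G T i j]
    by auto
  then show ?thesis
    unfolding reduce_def[of T] by (auto simp: fun_eq_iff sum_branch_prod_reduce)
qed

end

lemma is_cycle_induced_loopless_mono: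
  "is_cycle (induced (loopless G) U) c \<Longrightarrow> U \<subseteq> U' \<Longrightarrow> is_cycle (induced (loopless G) U') c"
  unfolding is_cycle_def edge_seq_def by auto

lemma st_superset:
  assumes "T \<in> st G" "T \<subseteq> S" "S \<subseteq> verts G"
  shows "S \<in> st G"
proof -
  have "\<not> is_cycle (induced (loopless G) (verts G - S)) c" for c
    using assms(1,2) is_cycle_induced_loopless_mono[of G "verts G - S" c "verts G - T"]
    by (auto simp: st_def structural_def)
  with assms show ?thesis by (auto simp: st_def structural_def)
qed

lemma red_seq_eq_reduce:
  assumes wf: "wf_graph G"
    and chain: "\<And>i. 1 \<le> i \<Longrightarrow> i < m \<Longrightarrow> S (Suc i) \<in> st G \<and> S (Suc i) \<subseteq> S i \<and> S i \<subseteq> verts G"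
    and "1 \<le> i" "i \<le> m"
  shows "red_seq G S i = reduce (S i) G"
  using assms(3,4)
proof (induction i rule: dec_induct)
  case (step n)
  with chain[of n] show ?case by (simp add: reduce_reduce[OF wf])
qed simp

theorem theorem2:
  fixes G :: "'v wgraph" and S :: "nat \<Rightarrow> 'v set" and m :: nat
  assumes "wf_graph G"
    and "1 \<le> m"
    and "S m \<in> st G"
    and "\<forall>i. 1 \<le> i \<and> i < m \<longrightarrow> S (Suc i) \<subseteq> S i"
    and "S 1 \<subseteq> verts G"
  shows "induces_seq G S m \<and> red_seq G S m = reduce (S m) G"
proof -
  have chain: "S k \<subseteq> S i" if "1 \<le> i" "i \<le> k" "k \<le> m" for i k
    by (rule lift_Suc_antimono_le_ivl[of "{1..<m}"]) (use assms(4) that in auto)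
  have sub: "S i \<subseteq> verts G" if "1 \<le> i" "i \<le> m" for i
    using chain[of 1 i] assms(5) that by auto
  have st: "S i \<in> st G" if "1 \<le> i" "i \<le> m" for i
    using st_superset[OF assms(3) chain[OF that order_refl] sub[OF that]] .
  have red: "red_seq G S i = reduce (S i) G" if "1 \<le> i" "i \<le> m" for i
    using red_seq_eq_reduce[OF assms(1) _ that] st sub assms(4) by simp
  have "S (Suc i) \<in> st (red_seq G S i)" if "1 \<le> i" "i \<le> m - 1" for i
    using that red structural_reduce[OF assms(1) st] assms(4) sub by simp
  with st assms(2) have "induces_seq G S m" unfolding induces_seq_def by simp
  with red[OF assms(2) order_refl] show ?thesis by simp
qed

end
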